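(* Let $G$ be a graph containing a cycle $C_n$ as a subgraph, where $n\ge 5$ is an integer not divisible by $4$. Then $G$ is a $4$-$\chi_\rho$-critical graph if and only if $G$ is isomorphic to $C_n$.
   Context: Graphs are finite and simple. A $k$-packing coloring of $G$ is a map $c:V(G)\to\{1,\ldots,k\}$ such that two distinct vertices $u,v$ with $c(u)=c(v)=i$ satisfy $d_G(u,v)>i$ (distance between vertices in different components is infinite); $\chi_\rho(G)$ is the smallest $k$ for which such a coloring exists. $G$ is $\chi_\rho$-critical if $\chi_\rho(H)<\chi_\rho(G)$ for every proper subgraph $H$ of $G$, and $4$-$\chi_\rho$-critical if moreover $\chi_\rho(G)=4$. *)

theory Defs
  imports Main "HOL-Library.Extended_Nat"
begin

type_synonym 'a graph = "'a set \<times> 'a set set"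

definition verts :: "'a graph \<Rightarrow> 'a set" where "verts G = fst G"
definition edges :: "'a graph \<Rightarrow> 'a set set" where "edges G = snd G"

definition graph :: "'a graph \<Rightarrow> bool" where
  "graph G \<longleftrightarrow> finite (verts G) \<and>
     (\<forall>e\<in>edges G. \<exists>u v. e = {u, v} \<and> u \<noteq> v \<and> u \<in> verts G \<and> v \<in> verts G)"

definition subgraph :: "'a graph \<Rightarrow> 'a graph \<Rightarrow> bool" where
  "subgraph H G \<longleftrightarrow> graph H \<and> graph G \<and> verts H \<subseteq> verts G \<and> edges H \<subseteq> edges G"

definition proper_subgraph :: "'a graph \<Rightarrow> 'a graph \<Rightarrow> bool" where
  "proper_subgraph H G \<longleftrightarrow> subgraph H G \<and> H \<noteq> G"

text \<open>A walk of length k from u to v: a vertex list with k+1 entries, consecutive ones adjacent.\<close>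
definition is_walk :: "'a graph \<Rightarrow> 'a list \<Rightarrow> bool" where
  "is_walk G xs \<longleftrightarrow> xs \<noteq> [] \<and> set xs \<subseteq> verts G \<and>
     (\<forall>i. Suc i < length xs \<longrightarrow> {xs ! i, xs ! Suc i} \<in> edges G)"

text \<open>Distance; infinite if no walk exists (different components).\<close>
definition dist :: "'a graph \<Rightarrow> 'a \<Rightarrow> 'a \<Rightarrow> enat" where
  "dist G u v = (INF xs \<in> {xs. is_walk G xs \<and> hd xs = u \<and> last xs = v}. enat (length xs - 1))"

definition packing_coloring :: "'a graph \<Rightarrow> nat \<Rightarrow> ('a \<Rightarrow> nat) \<Rightarrow> bool" where
  "packing_coloring G k c \<longleftrightarrow>
     (\<forall>v\<in>verts G. c v \<in> {1..k}) \<and>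
     (\<forall>u\<in>verts G. \<forall>v\<in>verts G. u \<noteq> v \<and> c u = c v \<longrightarrow> enat (c u) < dist G u v)"

definition packing_chromatic :: "'a graph \<Rightarrow> nat" where
  "packing_chromatic G = (LEAST k. \<exists>c. packing_coloring G k c)"

definition packing_critical :: "'a graph \<Rightarrow> bool" where
  "packing_critical G \<longleftrightarrow>
     (\<forall>H. proper_subgraph H G \<longrightarrow> packing_chromatic H < packing_chromatic G)"

definition packing_4_critical :: "'a graph \<Rightarrow> bool" where
  "packing_4_critical G \<longleftrightarrow> packing_critical G \<and> packing_chromatic G = 4"

definition graph_iso :: "'a graph \<Rightarrow> 'b graph \<Rightarrow> bool" where
  "graph_iso G H \<longleftrightarrow> (\<exists>f. bij_betw f (verts G) (verts H) \<and>
     (\<forall>u\<in>verts G. \<forall>v\<in>verts G. {u, v} \<in> edges G \<longleftrightarrow> {f u, f v} \<in> edges H))"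

definition cycle_graph :: "nat \<Rightarrow> nat graph" where
  "cycle_graph n = ({0..<n}, {{i, (i + 1) mod n} | i. i < n})"

end

theory Submission
  imports Defs
begin

(* Read around C_n, a packing colouring with colours 1, 2, 3 is an n-periodic sequence in
   which every second entry is 1 and the remaining entries alternate between 2 and 3, so
   n must be a multiple of 4.  Colouring 1, 2, 1, 3, ... around the cycle and
   giving the last vertex colour 4 shows chi_rho(C_n) = 4.  A proper subgraph of C_n misses
   an edge, so numbering the vertices along the path that remains maps it injectively and
   1-Lipschitz into the integers, and 1, 2, 1, 3, ... along that numbering is a packing
   3-colouring.  So C_n is 4-critical, and a 4-critical G containing C_n cannot contain it
   properly, as C_n already needs four colours. *)

lemma dist_le_walk_length:
  assumes "is_walk G xs" "hd xs = u" "last xs = v"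
  shows "dist G u v \<le> enat (length xs - 1)"
  unfolding dist_def by (rule INF_lower) (use assms in auto)

lemma walk_Lipschitz_bound:
  fixes \<phi> :: "'a \<Rightarrow> int"
  assumes walk: "is_walk G xs"
    and Lipschitz: "\<And>y z. y \<in> verts G \<Longrightarrow> z \<in> verts G \<Longrightarrow> {y, z} \<in> edges G \<Longrightarrow>
      \<bar>\<phi> y - \<phi> z\<bar> \<le> 1"
  shows "\<bar>\<phi> (hd xs) - \<phi> (last xs)\<bar> \<le> int (length xs - 1)"
proof -
  have "\<bar>\<phi> (xs ! 0) - \<phi> (xs ! k)\<bar> \<le> int k" if "k < length xs" for k
    using that
  proof (induction k)
    case (Suc k)
    have "xs ! k \<in> verts G" "xs ! Suc k \<in> verts G" "{xs ! k, xs ! Suc k} \<in> edges G"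
      using walk Suc.prems nth_mem[of k xs] nth_mem[of "Suc k" xs] unfolding is_walk_def by auto
    then have "\<bar>\<phi> (xs ! k) - \<phi> (xs ! Suc k)\<bar> \<le> 1" by (rule Lipschitz)
    with Suc show ?case by simp
  qed simp
  from this[of "length xs - 1"] walk show ?thesis
    by (simp add: is_walk_def hd_conv_nth last_conv_nth)
qed

lemma dist_ge_Lipschitz:
  fixes \<phi> :: "'a \<Rightarrow> int"
  assumes "\<And>y z. y \<in> verts G \<Longrightarrow> z \<in> verts G \<Longrightarrow> {y, z} \<in> edges G \<Longrightarrow>
    \<bar>\<phi> y - \<phi> z\<bar> \<le> 1"
  shows "enat (nat \<bar>\<phi> u - \<phi> v\<bar>) \<le> dist G u v"
  unfolding dist_def
proof (rule INF_greatest)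
  fix xs assume "xs \<in> {xs. is_walk G xs \<and> hd xs = u \<and> last xs = v}"
  then show "enat (nat \<bar>\<phi> u - \<phi> v\<bar>) \<le> enat (length xs - 1)"
    using walk_Lipschitz_bound[of G xs \<phi>] assms by auto
qed

lemma proper_subgraph_missing_edge:
  assumes "proper_subgraph H G"
    and no_isolated: "\<And>w. w \<in> verts G \<Longrightarrow> \<exists>e \<in> edges G. w \<in> e"
  shows "\<exists>e \<in> edges G. e \<notin> edges H"
proof (rule ccontr)
  assume "\<not> ?thesis"
  with assms(1) have "edges H = edges G" and sub: "graph H" "verts H \<subseteq> verts G" "H \<noteq> G"
    unfolding proper_subgraph_def subgraph_def by auto
  then have "verts H \<noteq> verts G" by (auto simp: verts_def edges_def prod_eq_iff)
  with sub obtain w where "w \<in> verts G" "w \<notin> verts H" by blast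
  with no_isolated \<open>edges H = edges G\<close> obtain e where "e \<in> edges H" "w \<in> e" by auto
  moreover from \<open>e \<in> edges H\<close> \<open>graph H\<close> have "e \<subseteq> verts H"
    unfolding graph_def by fastforce
  ultimately show False using \<open>w \<notin> verts H\<close> by blast
qed

lemma packing_chromatic_le:
  "packing_coloring G k c \<Longrightarrow> packing_chromatic G \<le> k"
  unfolding packing_chromatic_def by (rule Least_le) blast

lemma packing_coloring_mono:
  assumes "packing_coloring G k c" "k \<le> k'"
  shows "packing_coloring G k' c"
  using assms unfolding packing_coloring_def by (meson atLeastAtMost_iff order_trans)

lemma packing_coloring_chromatic:
  assumes "graph G"
  shows "\<exists>c. packing_coloring G (packing_chromatic G) c"
proof -
  obtain h where h: "bij_betw h (verts G) {0..<card (verts G)}"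
    using assms ex_bij_betw_finite_nat unfolding graph_def by blast
  have "packing_coloring G (card (verts G)) (\<lambda>v. Suc (h v))"
    unfolding packing_coloring_def
  proof (intro conjI ballI impI)
    fix v assume "v \<in> verts G"
    then show "Suc (h v) \<in> {1..card (verts G)}" using bij_betw_apply[OF h] by fastforce
  next
    fix u v assume "u \<in> verts G" "v \<in> verts G" "u \<noteq> v \<and> Suc (h u) = Suc (h v)"
    then show "enat (Suc (h u)) < dist G u v" using h by (auto simp: bij_betw_def inj_on_def)
  qed
  then have "\<exists>k c. packing_coloring G k c" by blast
  then show ?thesis unfolding packing_chromatic_def by (rule LeastI_ex)
qed

lemma less_packing_chromaticI:
  assumes "graph G" and "\<And>c. \<not> packing_coloring G k c"
  shows "k < packing_chromatic G"
proof (rule ccontr)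
  assume "\<not> k < packing_chromatic G"
  obtain c where c: "packing_coloring G (packing_chromatic G) c"
    using packing_coloring_chromatic[OF assms(1)] ..
  have "packing_coloring G k c"
    by (rule packing_coloring_mono[OF c]) (use \<open>\<not> k < packing_chromatic G\<close> in simp)
  with assms(2) show False by blast
qed

lemma mod_eq_imp_add_le:
  fixes i j m :: nat
  assumes "i mod m = j mod m" "i \<noteq> j"
  shows "i + m \<le> j \<or> j + m \<le> i"
proof -
  have "i + m \<le> j" if "i mod m = j mod m" "i < j" for i j
  proof -
    have "m dvd j - i" using mod_eq_dvd_iff_nat[of i j m] that by simp
    then show ?thesis using that(2) by (auto dest: dvd_imp_le)
  qed
  with assms show ?thesis by (metis linorder_neq_iff)
qed

definition path_color :: "nat \<Rightarrow> nat" where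
  "path_color j = (if even j then 1 else if j mod 4 = 1 then 2 else 3)"

lemma path_color_cases:
  "path_color k = 1 \<and> k mod 2 = 0 \<or> path_color k = 2 \<and> k mod 4 = 1 \<or>
    path_color k = 3 \<and> k mod 4 = 3"
proof -
  have "k mod 2 = 0 \<or> k mod 4 = 1 \<or> k mod 4 = 3" by presburger
  moreover have "even k \<longleftrightarrow> k mod 2 = 0" by presburger
  ultimately show ?thesis unfolding path_color_def by auto
qed

lemma path_color_range: "path_color j \<in> {1..3}"
  unfolding path_color_def by simp

lemma path_color_le_Suc: "path_color j \<le> Suc j"
  unfolding path_color_def by presburger

lemma path_color_separated:
  assumes "path_color i = path_color j" "i \<noteq> j"
  shows "int (path_color i) < \<bar>int i - int j\<bar>"
proof -
  have "i mod 2 = j mod 2 \<and> path_color i = 1 \<or> i mod 4 = j mod 4 \<and> path_color i \<le> 3"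
    using path_color_cases[of i] path_color_cases[of j] assms(1) by auto
  then have "i + path_color i < j \<or> j + path_color i < i"
    using mod_eq_imp_add_le[OF _ assms(2)] by fastforce
  then show ?thesis by linarith
qed

lemma packing_coloring_path_position:
  fixes p :: "'a \<Rightarrow> nat"
  assumes inj: "inj_on p (verts H)"
    and Lipschitz: "\<And>y z. y \<in> verts H \<Longrightarrow> z \<in> verts H \<Longrightarrow> {y, z} \<in> edges H \<Longrightarrow>
      \<bar>int (p y) - int (p z)\<bar> \<le> 1"
  shows "packing_coloring H 3 (\<lambda>v. path_color (p v))"
  unfolding packing_coloring_def
proof (intro conjI ballI impI)
  fix v show "path_color (p v) \<in> {1..3}" by (rule path_color_range)
next
  fix u v assume "u \<in> verts H" "v \<in> verts H"
    and uv: "u \<noteq> v \<and> path_color (p u) = path_color (p v)"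
  then have "p u \<noteq> p v" using inj by (auto dest: inj_onD)
  then have "path_color (p u) < nat \<bar>int (p u) - int (p v)\<bar>"
    using path_color_separated uv by fastforce
  also have "enat (nat \<bar>int (p u) - int (p v)\<bar>) \<le> dist H u v"
    by (rule dist_ge_Lipschitz) (rule Lipschitz)
  finally show "enat (path_color (p u)) < dist H u v" by simp
qed

definition cycle_dist :: "nat \<Rightarrow> nat \<Rightarrow> nat \<Rightarrow> int" where
  "cycle_dist n i j = min \<bar>int i - int j\<bar> (int n - \<bar>int i - int j\<bar>)"

lemma cycle_dist_Suc_mod:
  assumes "i < n" "j < n"
  shows "\<bar>cycle_dist n i j - cycle_dist n i (Suc j mod n)\<bar> \<le> 1"
  using assms unfolding cycle_dist_def by (simp add: mod_Suc min_def abs_if)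

definition cycle_color :: "nat \<Rightarrow> nat \<Rightarrow> nat" where
  "cycle_color n j = (if j = n - 1 then 4 else path_color j)"

lemma cycle_color_separated:
  assumes "i < n" "j < n" "i \<noteq> j" "cycle_color n i = cycle_color n j"
  shows "int (cycle_color n i) < cycle_dist n i j"
proof -
  have "i < n - 1" "j < n - 1" and same: "path_color i = path_color j"
    and color: "cycle_color n i = path_color i"
    using assms path_color_range[of i] path_color_range[of j]
    unfolding cycle_color_def by (auto split: if_splits)
  have "int (path_color i) < \<bar>int i - int j\<bar>"
    using path_color_separated[OF same assms(3)] .
  moreover have "int (path_color i) < int n - \<bar>int i - int j\<bar>"
    using path_color_le_Suc[of i] path_color_le_Suc[of j] same \<open>i < n - 1\<close> \<open>j < n - 1\<close>
    by linarith
  ultimately show ?thesis unfolding color cycle_dist_def by simp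
qed

text \<open>The packing condition for three colours on the ray 0, 1, 2, \<dots>: pairs at distance
  greater than 3 are unconstrained.\<close>

definition packing3_sequence :: "(nat \<Rightarrow> nat) \<Rightarrow> bool" where
  "packing3_sequence d \<longleftrightarrow>
    (\<forall>j. d j \<in> {1, 2, 3} \<and> (\<forall>k \<in> {1, 2, 3}. d (j + k) = d j \<longrightarrow> d j < k))"

lemma packing3_sequenceD:
  assumes "packing3_sequence d"
  shows "d j \<in> {1, 2, 3}" and "d (j + 1) \<noteq> d j"
    and "d (j + 2) = d j \<Longrightarrow> d j = 1" and "d (j + 3) = d j \<Longrightarrow> d j \<noteq> 3"
  using assms unfolding packing3_sequence_def by (auto dest!: spec[of _ j])

lemma packing3_sequence_shift:
  "packing3_sequence d \<Longrightarrow> packing3_sequence (\<lambda>k. d (j + k))"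
  unfolding packing3_sequence_def by (simp add: add.assoc)

text \<open>If \<open>d 2\<close> and \<open>d 3\<close> are 2 and 3, then \<open>d 1 = d 4 = 1\<close>, which forces \<open>d 0 = d 3\<close> and
  \<open>d 5 = d 2\<close>; one of these repeats the colour 3 at distance 3.\<close>

lemma packing3_sequence_one_at_2_or_3:
  assumes "packing3_sequence d"
  shows "d 2 = 1 \<or> d 3 = 1"
proof -
  note D = packing3_sequenceD[OF assms]
  have "d 0 \<in> {1,2,3}" "d 1 \<in> {1,2,3}" "d 2 \<in> {1,2,3}"
    "d 3 \<in> {1,2,3}" "d 4 \<in> {1,2,3}" "d 5 \<in> {1,2,3}"
    using D(1) by blast+
  moreover have "d 1 \<noteq> d 0" "d 2 \<noteq> d 1" "d 3 \<noteq> d 2" "d 4 \<noteq> d 3" "d 5 \<noteq> d 4"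
    using D(2)[of 0] D(2)[of 1] D(2)[of 2] D(2)[of 3] D(2)[of 4] by (simp_all add: numeral_eq_Suc)
  moreover have "d 2 = d 0 \<longrightarrow> d 0 = 1" "d 3 = d 1 \<longrightarrow> d 1 = 1"
    "d 4 = d 2 \<longrightarrow> d 2 = 1" "d 5 = d 3 \<longrightarrow> d 3 = 1"
    using D(3)[of 0] D(3)[of 1] D(3)[of 2] D(3)[of 3] by (simp_all add: numeral_eq_Suc)
  moreover have "d 3 = d 0 \<longrightarrow> d 0 \<noteq> 3" "d 5 = d 2 \<longrightarrow> d 2 \<noteq> 3"
    using D(4)[of 0] D(4)[of 2] by (simp_all add: numeral_eq_Suc)
  ultimately show ?thesis unfolding insert_iff empty_iff by presburger
qed

lemma periodic_add_mult:
  fixes d :: "nat \<Rightarrow> 'b"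
  assumes "\<And>j. d (j + p) = d j"
  shows "d (j + m * p) = d j"
proof (induction m)
  case (Suc m)
  have "d (j + Suc m * p) = d (j + m * p + p)" by (simp add: algebra_simps)
  with Suc assms show ?case by simp
qed simp

lemma packing3_sequence_periodic_one_in_pair:
  assumes "packing3_sequence d" and period: "\<And>j. d (j + n) = d j" and "0 < n"
  shows "d j = 1 \<or> d (j + 1) = 1"
proof -
  define i where "i = j + 2 * n - 2"
  have "d (i + 2) = 1 \<or> d (i + 3) = 1"
    using packing3_sequence_one_at_2_or_3[OF packing3_sequence_shift[OF assms(1), of i]] by simp
  moreover have "i + 2 = j + 2 * n" "i + 3 = (j + 1) + 2 * n"
    using \<open>0 < n\<close> unfolding i_def by simp_all
  ultimately show ?thesis using periodic_add_mult[of d n, OF period] by metis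
qed

text \<open>Once the 1s alternate, the colours between them cannot repeat at distance 2.\<close>

lemma packing3_sequence_period_4:
  assumes "packing3_sequence d" and pairs: "\<And>j. d j = 1 \<or> d (j + 1) = 1"
  shows "d (j + 4) = d j"
proof -
  define e where "e = (\<lambda>k. d (j + k))"
  have "packing3_sequence e"
    unfolding e_def by (rule packing3_sequence_shift[OF assms(1)])
  note D = packing3_sequenceD[OF this]
  have "e 0 \<in> {1,2,3}" "e 1 \<in> {1,2,3}" "e 2 \<in> {1,2,3}" "e 3 \<in> {1,2,3}"
    "e 4 \<in> {1,2,3}"
    using D(1) by blast+
  moreover have "e 1 \<noteq> e 0" "e 2 \<noteq> e 1" "e 3 \<noteq> e 2" "e 4 \<noteq> e 3"
    using D(2)[of 0] D(2)[of 1] D(2)[of 2] D(2)[of 3] by (simp_all add: numeral_eq_Suc)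
  moreover have "e 2 = e 0 \<longrightarrow> e 0 = 1" "e 4 = e 2 \<longrightarrow> e 2 = 1"
    using D(3)[of 0] D(3)[of 2] by (simp_all add: numeral_eq_Suc)
  moreover have "e 0 = 1 \<or> e 1 = 1" "e 1 = 1 \<or> e 2 = 1"
    "e 2 = 1 \<or> e 3 = 1" "e 3 = 1 \<or> e 4 = 1"
    using pairs[of j] pairs[of "j + 1"] pairs[of "j + 2"] pairs[of "j + 3"]
    unfolding e_def by (simp_all add: numeral_eq_Suc)
  ultimately have "e 4 = e 0" unfolding insert_iff empty_iff by presburger
  then show ?thesis unfolding e_def by simp
qed

lemma packing3_sequence_four_dvd_period:
  assumes "packing3_sequence d" and period: "\<And>j. d (j + n) = d j"
  shows "4 dvd n"
proof (rule ccontr)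
  assume "\<not> 4 dvd n"
  then have r: "n mod 4 = 1 \<or> n mod 4 = 2 \<or> n mod 4 = 3" and "0 < n" by presburger+
  note D = packing3_sequenceD[OF assms(1)]
  have period4: "d (j + 4) = d j" for j
    using packing3_sequence_period_4[OF assms(1)
        packing3_sequence_periodic_one_in_pair[OF assms \<open>0 < n\<close>]] .
  have period_r: "d (j + n mod 4) = d j" for j
  proof -
    have "d (j + n mod 4) = d (j + n mod 4 + n div 4 * 4)"
      by (rule periodic_add_mult[of d 4, OF period4, symmetric])
    also have "j + n mod 4 + n div 4 * 4 = j + n" by simp
    finally show ?thesis using period by simp
  qed
  show False
    using r
  proof (elim disjE)
    assume "n mod 4 = 1"
    then show False using period_r[of 0] D(2)[of 0] by simp
  next
    assume "n mod 4 = 2"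
    then have "d 0 = 1" "d 1 = 1"
      using period_r[of 0] period_r[of 1] D(3)[of 0] D(3)[of 1] by simp_all
    then show False using D(2)[of 0] by simp
  next
    assume "n mod 4 = 3"
    then have "d 4 = d 1" using period_r[of 1] by simp
    then show False using period4[of 0] D(2)[of 0] by simp
  qed
qed

lemma cycle_graph_edge_iff:
  assumes "i < n" "j < n"
  shows "{i, j} \<in> edges (cycle_graph n) \<longleftrightarrow> j = Suc i mod n \<or> i = Suc j mod n"
proof
  assume "{i, j} \<in> edges (cycle_graph n)"
  then obtain k where "{i, j} = {k, Suc k mod n}"
    unfolding cycle_graph_def edges_def by auto
  then show "j = Suc i mod n \<or> i = Suc j mod n" by (auto simp: doubleton_eq_iff)
next
  assume "j = Suc i mod n \<or> i = Suc j mod n"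
  then have "{i, j} = {i, (i + 1) mod n} \<or> {i, j} = {j, (j + 1) mod n}" by auto
  with assms show "{i, j} \<in> edges (cycle_graph n)"
    unfolding cycle_graph_def edges_def by auto
qed

lemma Suc_mod_inj: "i < n \<Longrightarrow> j < n \<Longrightarrow> Suc i mod n = Suc j mod n \<Longrightarrow> i = j"
  by (auto simp: mod_Suc split: if_splits)

locale cycle_labelling =
  fixes G :: "'a graph" and n :: nat and f :: "'a \<Rightarrow> nat"
  assumes graph: "graph G" and three_le: "3 \<le> n"
    and bij: "bij_betw f (verts G) {0..<n}"
    and edges_iff: "\<And>u v. u \<in> verts G \<Longrightarrow> v \<in> verts G \<Longrightarrow>
      {u, v} \<in> edges G \<longleftrightarrow> {f u, f v} \<in> edges (cycle_graph n)"
begin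

definition vertex_at :: "nat \<Rightarrow> 'a" where
  "vertex_at = inv_into (verts G) f"

lemma n_pos: "0 < n"
  using three_le by simp

lemma f_less: "v \<in> verts G \<Longrightarrow> f v < n"
  using bij_betw_apply[OF bij] by simp

lemma f_eq_iff: "u \<in> verts G \<Longrightarrow> v \<in> verts G \<Longrightarrow> f u = f v \<longleftrightarrow> u = v"
  using bij by (auto simp: bij_betw_def dest: inj_onD)

lemma vertex_at_in: "j < n \<Longrightarrow> vertex_at j \<in> verts G"
  unfolding vertex_at_def using bij_betw_apply[OF bij_betw_inv_into[OF bij]] by simp

lemma f_vertex_at: "j < n \<Longrightarrow> f (vertex_at j) = j"
  unfolding vertex_at_def using bij by (simp add: bij_betw_def f_inv_into_f)

lemma vertex_at_f: "v \<in> verts G \<Longrightarrow> vertex_at (f v) = v"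
  unfolding vertex_at_def using bij by (simp add: bij_betw_def)

lemma adjacent_iff:
  "u \<in> verts G \<Longrightarrow> v \<in> verts G \<Longrightarrow>
    {u, v} \<in> edges G \<longleftrightarrow> f v = Suc (f u) mod n \<or> f u = Suc (f v) mod n"
  using edges_iff cycle_graph_edge_iff f_less by blast

lemma edge_vertex_at_Suc: "j < n \<Longrightarrow> {vertex_at j, vertex_at (Suc j mod n)} \<in> edges G"
  using adjacent_iff vertex_at_in f_vertex_at n_pos by simp

lemma dist_vertex_at_le: "dist G (vertex_at (j mod n)) (vertex_at ((j + k) mod n)) \<le> enat k"
proof -
  define xs where "xs = map (\<lambda>t. vertex_at ((j + t) mod n)) [0..<Suc k]"
  have "is_walk G xs"
    unfolding is_walk_def
  proof (intro conjI allI impI)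
    show "xs \<noteq> []" "set xs \<subseteq> verts G"
      unfolding xs_def using vertex_at_in n_pos by auto
    fix i assume "Suc i < length xs"
    moreover have "(j + Suc i) mod n = Suc ((j + i) mod n) mod n" by (simp add: mod_Suc_eq)
    ultimately show "{xs ! i, xs ! Suc i} \<in> edges G"
      unfolding xs_def using edge_vertex_at_Suc[of "(j + i) mod n"] n_pos
      by (simp del: upt_Suc)
  qed
  then show ?thesis
    using dist_le_walk_length[of G xs] unfolding xs_def
    by (simp add: hd_map last_map del: upt_Suc)
qed

lemma cycle_dist_le_dist:
  assumes "u \<in> verts G" "v \<in> verts G"
  shows "enat (nat (cycle_dist n (f u) (f v))) \<le> dist G u v"
proof -
  have "\<bar>cycle_dist n (f u) (f y) - cycle_dist n (f u) (f z)\<bar> \<le> 1"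
    if "y \<in> verts G" "z \<in> verts G" "{y, z} \<in> edges G" for y z
  proof -
    have "f z = Suc (f y) mod n \<or> f y = Suc (f z) mod n"
      using adjacent_iff that by blast
    then show ?thesis
      using cycle_dist_Suc_mod[of "f u" n "f y"] cycle_dist_Suc_mod[of "f u" n "f z"]
        f_less assms(1) that(1,2) by (auto simp: abs_minus_commute)
  qed
  from dist_ge_Lipschitz[of G "\<lambda>x. cycle_dist n (f u) (f x)", OF this]
  have "enat (nat \<bar>cycle_dist n (f u) (f u) - cycle_dist n (f u) (f v)\<bar>) \<le> dist G u v" .
  moreover have "cycle_dist n (f u) (f u) = 0" "0 \<le> cycle_dist n (f u) (f v)"
    using f_less[OF assms(1)] f_less[OF assms(2)] unfolding cycle_dist_def by auto
  ultimately show ?thesis by simp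
qed

lemma packing_coloring_cycle_color: "packing_coloring G 4 (\<lambda>v. cycle_color n (f v))"
  unfolding packing_coloring_def
proof (intro conjI ballI impI)
  fix v show "cycle_color n (f v) \<in> {1..4}"
    using path_color_range[of "f v"] unfolding cycle_color_def by auto
next
  fix u v assume u: "u \<in> verts G" and v: "v \<in> verts G"
    and uv: "u \<noteq> v \<and> cycle_color n (f u) = cycle_color n (f v)"
  then have "cycle_color n (f u) < nat (cycle_dist n (f u) (f v))"
    using cycle_color_separated[of "f u" n "f v"] f_less f_eq_iff by fastforce
  also have "enat (nat (cycle_dist n (f u) (f v))) \<le> dist G u v"
    by (rule cycle_dist_le_dist[OF u v])
  finally show "enat (cycle_color n (f u)) < dist G u v" by simp
qed

lemma four_dvd_if_packing_coloring_3:
  assumes c: "packing_coloring G 3 c" and "4 \<le> n"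
  shows "4 dvd n"
proof -
  define d where "d j = c (vertex_at (j mod n))" for j
  have "packing3_sequence d"
    unfolding packing3_sequence_def
  proof (intro allI conjI ballI impI)
    fix j
    show "d j \<in> {1, 2, 3}"
      using c vertex_at_in[of "j mod n"] n_pos unfolding packing_coloring_def d_def by auto
    fix k :: nat assume k: "k \<in> {1, 2, 3}" and same: "d (j + k) = d j"
    let ?u = "vertex_at (j mod n)" and ?v = "vertex_at ((j + k) mod n)"
    have "(j + k) mod n \<noteq> j mod n"
    proof
      assume "(j + k) mod n = j mod n"
      then have "n dvd k" using mod_eq_dvd_iff_nat[of j "j + k" n] by simp
      with k \<open>4 \<le> n\<close> show False by (auto dest: dvd_imp_le)
    qed
    then have "?u \<noteq> ?v" and uv: "?u \<in> verts G" "?v \<in> verts G"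
      using f_vertex_at[of "j mod n"] f_vertex_at[of "(j + k) mod n"] vertex_at_in n_pos by auto
    then have "enat (d j) < dist G ?u ?v"
      using c same[symmetric] unfolding packing_coloring_def d_def by blast
    also have "\<dots> \<le> enat k"
      using dist_vertex_at_le[of j k] .
    finally show "d j < k" by simp
  qed
  moreover have "d (j + n) = d j" for j
    unfolding d_def by simp
  ultimately show ?thesis by (rule packing3_sequence_four_dvd_period)
qed

lemma packing_chromatic_eq_4:
  assumes "4 \<le> n" "\<not> 4 dvd n"
  shows "packing_chromatic G = 4"
proof -
  have "3 < packing_chromatic G"
    using less_packing_chromaticI[OF graph] four_dvd_if_packing_coloring_3 assms by blast
  moreover have "packing_chromatic G \<le> 4"
    by (rule packing_chromatic_le[OF packing_coloring_cycle_color])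
  ultimately show ?thesis by simp
qed

definition label_from :: "'a \<Rightarrow> 'a \<Rightarrow> nat" where
  "label_from b v = (f v + n - f b) mod n"

lemma inj_on_label_from:
  assumes "b \<in> verts G"
  shows "inj_on (label_from b) (verts G)"
proof (rule inj_onI)
  fix u v assume "u \<in> verts G" "v \<in> verts G" "label_from b u = label_from b v"
  then have "f u = f v"
    using f_less[of u] f_less[of v] f_less[OF assms] unfolding label_from_def
    by (auto simp: mod_if split: if_splits)
  with \<open>u \<in> verts G\<close> \<open>v \<in> verts G\<close> show "u = v" using f_eq_iff by blast
qed

lemma label_from_Suc:
  assumes "y \<in> verts G" "z \<in> verts G" "b \<in> verts G" "f z = Suc (f y) mod n" "z \<noteq> b"
  shows "label_from b z = Suc (label_from b y)"
proof -
  have "f z \<noteq> f b" using assms f_eq_iff by blast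
  then show ?thesis
    using assms(4) f_less[OF assms(1)] f_less[OF assms(2)] f_less[OF assms(3)]
    unfolding label_from_def by (auto simp: mod_Suc mod_if split: if_splits)
qed

text \<open>Cutting the cycle at the edge \<open>{a, b}\<close> leaves the path from \<open>b\<close> round to \<open>a\<close>,
  along which \<open>label_from b\<close> counts up from 0.\<close>

lemma label_from_edge:
  assumes ab: "a \<in> verts G" "b \<in> verts G" "f b = Suc (f a) mod n"
    and yz: "y \<in> verts G" "z \<in> verts G" "{y, z} \<in> edges G" "{y, z} \<noteq> {a, b}"
  shows "\<bar>int (label_from b y) - int (label_from b z)\<bar> \<le> 1"
proof -
  have step: "label_from b w = Suc (label_from b x)"
    if "x \<in> verts G" "w \<in> verts G" "{x, w} = {y, z}" "f w = Suc (f x) mod n" for x w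
  proof (rule label_from_Suc[OF that(1,2) ab(2) that(4)])
    show "w \<noteq> b"
    proof
      assume "w = b"
      with that ab(3) have "f x = f a"
        using Suc_mod_inj f_less[OF that(1)] f_less[OF ab(1)] by metis
      with that(1) ab(1) have "x = a" using f_eq_iff by blast
      with \<open>w = b\<close> that(3) yz(4) show False by simp
    qed
  qed
  have "f z = Suc (f y) mod n \<or> f y = Suc (f z) mod n"
    using adjacent_iff yz by blast
  then show ?thesis
    using step[of y z] step[of z y] yz(1,2) by (auto simp: insert_commute)
qed

lemma proper_subgraph_path_position:
  assumes "proper_subgraph H G"
  obtains p :: "'a \<Rightarrow> nat" where "inj_on p (verts H)"
    and "\<And>y z. y \<in> verts H \<Longrightarrow> z \<in> verts H \<Longrightarrow> {y, z} \<in> edges H \<Longrightarrow>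
      \<bar>int (p y) - int (p z)\<bar> \<le> 1"
proof -
  have sub: "graph H" "verts H \<subseteq> verts G" "edges H \<subseteq> edges G"
    using assms unfolding proper_subgraph_def subgraph_def by auto
  have "\<exists>e \<in> edges G. w \<in> e" if "w \<in> verts G" for w
    using edge_vertex_at_Suc[OF f_less[OF that]] vertex_at_f[OF that] by auto
  then obtain e where e: "e \<in> edges G" "e \<notin> edges H"
    using proper_subgraph_missing_edge[OF assms] by blast
  then obtain x y where "e = {x, y}" "x \<in> verts G" "y \<in> verts G"
    using graph unfolding graph_def by blast
  then obtain a b where ab: "a \<in> verts G" "b \<in> verts G" "f b = Suc (f a) mod n"
    and "{a, b} \<notin> edges H"
    using e adjacent_iff by (metis insert_commute)
  have "inj_on (label_from b) (verts H)"
    using inj_on_label_from[OF ab(2)] sub(2) by (rule inj_on_subset)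
  moreover have "\<bar>int (label_from b y) - int (label_from b z)\<bar> \<le> 1"
    if "y \<in> verts H" "z \<in> verts H" "{y, z} \<in> edges H" for y z
  proof (rule label_from_edge[OF ab(1-3)])
    show "y \<in> verts G" "z \<in> verts G" "{y, z} \<in> edges G"
      using that sub by auto
    show "{y, z} \<noteq> {a, b}" using that(3) \<open>{a, b} \<notin> edges H\<close> by auto
  qed
  ultimately show ?thesis using that by blast
qed

lemma packing_chromatic_proper_subgraph_le_3:
  assumes "proper_subgraph H G"
  shows "packing_chromatic H \<le> 3"
proof -
  obtain p where "inj_on p (verts H)"
    and "\<And>y z. y \<in> verts H \<Longrightarrow> z \<in> verts H \<Longrightarrow> {y, z} \<in> edges H \<Longrightarrow>
      \<bar>int (p y) - int (p z)\<bar> \<le> 1"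
    using proper_subgraph_path_position[OF assms] by blast
  then show ?thesis
    by (intro packing_chromatic_le) (rule packing_coloring_path_position)
qed

end

lemma graph_iso_cycle_labelling:
  assumes "graph G" "3 \<le> n" "graph_iso G (cycle_graph n)"
  obtains f where "cycle_labelling G n f"
proof -
  have "verts (cycle_graph n) = {0..<n}" unfolding cycle_graph_def verts_def by simp
  with assms show ?thesis using that unfolding graph_iso_def cycle_labelling_def by auto
qed

theorem proposition3p2:
  fixes G :: "'a graph" and n :: nat
  assumes "graph G"
    and "n \<ge> 5" and "\<not> 4 dvd n"
    and "\<exists>H. subgraph H G \<and> graph_iso H (cycle_graph n)"
  shows "packing_4_critical G \<longleftrightarrow> graph_iso G (cycle_graph n)"
proof -
  have n: "3 \<le> n" "4 \<le> n" using assms(2) by simp_all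
  show ?thesis
  proof
    assume "graph_iso G (cycle_graph n)"
    then obtain f where "cycle_labelling G n f"
      using graph_iso_cycle_labelling assms(1) n(1) by blast
    then interpret cycle_labelling G n f .
    show "packing_4_critical G"
      unfolding packing_4_critical_def packing_critical_def
      using packing_chromatic_eq_4 packing_chromatic_proper_subgraph_le_3 n(2) assms(3) by fastforce
  next
    assume critical: "packing_4_critical G"
    obtain H where H: "subgraph H G" "graph_iso H (cycle_graph n)" using assms(4) by blast
    then obtain f where "cycle_labelling H n f"
      using graph_iso_cycle_labelling n(1) unfolding subgraph_def by blast
    then have "packing_chromatic H = 4"
      using cycle_labelling.packing_chromatic_eq_4 n(2) assms(3) by blast
    with critical have "\<not> proper_subgraph H G"
      unfolding packing_4_critical_def packing_critical_def by (metis less_irrefl)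
    with H show "graph_iso G (cycle_graph n)" unfolding proper_subgraph_def by auto
  qed
qed

end
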